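(* A finite group $G$ is $2'$-simple if and only if it has a subnormal series $1=I_0\trianglelefteq I_1\trianglelefteq\cdots\trianglelefteq I_t=G$ in which every quotient $I_{j+1}/I_j$ is generated by elements of order $2$.
   Context: A finite group $G$ is called $2'$-simple if it has no proper normal subgroup of odd index (equivalently, no nontrivial quotient of odd order). A subnormal series is a chain of subgroups each normal in the next. *)

theory Defs
  imports "HOL-Algebra.Algebra"
begin

definition two_prime_simple :: "('a, 'b) monoid_scheme \<Rightarrow> bool" where
  "two_prime_simple G \<longleftrightarrow>
     (\<forall>N. N \<lhd> G \<and> odd (card (rcosets\<^bsub>G\<^esub> N)) \<longrightarrow> N = carrier G)"

definition generated_by_involutions :: "('a, 'b) monoid_scheme \<Rightarrow> bool" where
  "generated_by_involutions Q \<longleftrightarrow>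
     generate Q {x \<in> carrier Q. group.ord Q x = 2} = carrier Q"

definition involution_subnormal_series ::
    "('a, 'b) monoid_scheme \<Rightarrow> (nat \<Rightarrow> 'a set) \<Rightarrow> nat \<Rightarrow> bool" where
  "involution_subnormal_series G I t \<longleftrightarrow>
     I 0 = {\<one>\<^bsub>G\<^esub>} \<and> I t = carrier G \<and>
     (\<forall>j<t. subgroup (I (Suc j)) G \<and>
            I j \<lhd> (G\<lparr>carrier := I (Suc j)\<rparr>) \<and>
            generated_by_involutions ((G\<lparr>carrier := I (Suc j)\<rparr>) Mod (I j)))"

end

theory Submission
  imports Defs "HOL-Library.Z2"
begin

(*
  For a normal subgroup N let sqrt N = square_roots G N = {x. x * x \<in> N}. Then G/N has
  odd order iff it has no involution, i.e. iff sqrt N = N; and G/N is generated by involutions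
  iff G is generated by sqrt N, because the cosets of elements of sqrt N are exactly the
  involutions of G/N together with its identity.

  If M is normal of odd index, then sqrt M = M, so along an involution series each term, being
  generated by square roots of elements of the previous one, stays inside M; hence M = G.
  Conversely, iterating N \<mapsto> <sqrt N> from 1 gives an ascending chain of normal subgroups
  with involution-generated factors. In a finite group it becomes stationary at some N with
  sqrt N = N, which therefore has odd index and equals G when G is 2'-simple.
*)

lemma even_card_fixpoint_free_involution:
  assumes "\<And>x. x \<in> T \<Longrightarrow> h x \<in> T" "\<And>x. x \<in> T \<Longrightarrow> h (h x) = x"
    and "\<And>x. x \<in> T \<Longrightarrow> h x \<noteq> x"
  shows "even (card T)"
proof -
  have of_nat_bit: "(of_nat n :: bit) = (if even n then 0 else 1)" for n
    by (induction n) auto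
  have "(\<Sum>x\<in>T. (1::bit)) = 0"
    by (rule sum_involution_eq_0[where h = h]) (use assms in auto)
  then show ?thesis
    by (simp add: of_nat_bit split: if_splits)
qed

lemma increasing_chain_stabilises:
  fixes f :: "nat \<Rightarrow> 'a set"
  assumes "\<And>j. f j \<subseteq> f (Suc j)" and "\<And>j. f j \<subseteq> S" and "finite S"
  shows "\<exists>m. f (Suc m) = f m"
proof (rule ccontr)
  assume "\<not> ?thesis"
  with assms(1) have "strict_mono f"
    by (auto simp: strict_mono_Suc_iff psubset_eq)
  then have "inj f"
    by (rule strict_mono_imp_inj_on)
  moreover have "finite (range f)"
    using assms(2,3) by (meson finite_Pow_iff finite_subset image_subsetI PowI)
  ultimately show False
    using finite_imageD by fastforce
qed

lemma (in group) ord_eq_2_iff: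
  assumes "x \<in> carrier G"
  shows "ord x = 2 \<longleftrightarrow> x \<noteq> \<one> \<and> x \<otimes> x = \<one>"
proof -
  have "x \<otimes> x = \<one> \<longleftrightarrow> ord x dvd 2"
    using pow_eq_id[OF assms, of 2] assms by (simp add: numeral_2_eq_2)
  moreover have "d dvd 2 \<longleftrightarrow> d = 1 \<or> d = 2" for d :: nat
    using prime_nat_iff[of 2] by auto
  ultimately show ?thesis
    using ord_eq_1[OF assms] by auto
qed

lemma (in group) even_order_iff_exists_involution:
  assumes "finite (carrier G)"
  shows "even (order G) \<longleftrightarrow> (\<exists>x\<in>carrier G. x \<noteq> \<one> \<and> x \<otimes> x = \<one>)"
proof
  assume "\<exists>x\<in>carrier G. x \<noteq> \<one> \<and> x \<otimes> x = \<one>"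
  then obtain x where "x \<in> carrier G" "ord x = 2"
    using ord_eq_2_iff by blast
  then show "even (order G)"
    using ord_dvd_group_order by fastforce
next
  assume even: "even (order G)"
  show "\<exists>x\<in>carrier G. x \<noteq> \<one> \<and> x \<otimes> x = \<one>"
  proof (rule ccontr)
    assume no_involution: "\<not> ?thesis"
    have "even (card (carrier G - {\<one>}))"
    proof (rule even_card_fixpoint_free_involution[where h = "\<lambda>x. inv x"])
      fix x assume x: "x \<in> carrier G - {\<one>}"
      then show "inv x \<in> carrier G - {\<one>}" "inv (inv x) = x"
        by auto
      show "inv x \<noteq> x"
        using x no_involution by (metis DiffD1 DiffD2 insertI1 r_inv)
    qed
    moreover have "card (carrier G - {\<one>}) = order G - 1" and "order G > 0"
      using assms by (simp_all add: order_def card_Diff_singleton card_gt_0_iff carrier_not_empty)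
    ultimately show False
      using even by simp
  qed
qed

definition square_roots :: "('a, 'b) monoid_scheme \<Rightarrow> 'a set \<Rightarrow> 'a set" where
  "square_roots G N = {x \<in> carrier G. x \<otimes>\<^bsub>G\<^esub> x \<in> N}"

lemma (in subgroup) subset_square_roots: "H \<subseteq> square_roots G H"
  by (auto simp: square_roots_def)

lemma (in normal) rcos_eq_self_iff:
  "x \<in> carrier G \<Longrightarrow> H #> x = H \<longleftrightarrow> x \<in> H"
  using coset_join1 rcos_const subgroup_axioms by blast

lemma (in normal) rcos_square_eq_one_iff:
  "x \<in> carrier G \<Longrightarrow> (H #> x) <#> (H #> x) = H \<longleftrightarrow> x \<in> square_roots G H"
  by (simp add: rcos_sum rcos_eq_self_iff square_roots_def)

lemma (in normal) square_roots_eq_iff_odd_index: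
  assumes "finite (carrier G)"
  shows "square_roots G H = H \<longleftrightarrow> odd (card (rcosets H))"
proof -
  interpret Q: group "G Mod H"
    by (rule factorgroup_is_group)
  have "finite (carrier (G Mod H))"
    using assms by (simp add: carrier_FactGroup)
  then have "even (card (rcosets H)) \<longleftrightarrow>
      (\<exists>Y\<in>carrier (G Mod H). Y \<noteq> H \<and> Y <#> Y = H)"
    using Q.even_order_iff_exists_involution by (simp add: order_def FactGroup_def)
  also have "\<dots> \<longleftrightarrow> (\<exists>x\<in>carrier G. x \<notin> H \<and> x \<in> square_roots G H)"
    by (auto simp: carrier_FactGroup rcos_eq_self_iff rcos_square_eq_one_iff)
  also have "\<dots> \<longleftrightarrow> square_roots G H \<noteq> H"
    using subset_square_roots by (auto simp: square_roots_def)
  finally show ?thesis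
    by blast
qed

lemma (in normal) generated_by_involutions_FactGroup_iff:
  "generated_by_involutions (G Mod H) \<longleftrightarrow> generate G (square_roots G H) = carrier G"
proof -
  interpret Q: group "G Mod H"
    by (rule factorgroup_is_group)
  interpret \<pi>: group_hom G "G Mod H" "\<lambda>x. H #> x"
    by (simp add: group_hom_axioms_def group_hom_def factorgroup_is_group r_coset_hom_Mod)
  let ?inv = "{Y \<in> carrier (G Mod H). group.ord (G Mod H) Y = 2}"
  let ?K = "generate G (square_roots G H)"
  have square_roots_carrier: "square_roots G H \<subseteq> carrier G"
    by (auto simp: square_roots_def)
  have "(\<lambda>x. H #> x) ` square_roots G H = insert H ?inv"
  proof -
    have "(\<lambda>x. H #> x) ` square_roots G H = {Y \<in> carrier (G Mod H). Y <#> Y = H}"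
    proof (intro equalityI subsetI)
      fix Y assume "Y \<in> (\<lambda>x. H #> x) ` square_roots G H"
      then obtain x where "x \<in> square_roots G H" "Y = H #> x"
        by blast
      then show "Y \<in> {Y \<in> carrier (G Mod H). Y <#> Y = H}"
        using rcos_square_eq_one_iff[of x] by (simp add: carrier_FactGroup square_roots_def)
    next
      fix Y assume "Y \<in> {Y \<in> carrier (G Mod H). Y <#> Y = H}"
      then obtain x where "x \<in> carrier G" "Y = H #> x" "Y <#> Y = H"
        by (auto simp: carrier_FactGroup)
      then show "Y \<in> (\<lambda>x. H #> x) ` square_roots G H"
        using rcos_square_eq_one_iff[of x] by blast
    qed
    also have "\<dots> = insert H ?inv"
      using Q.ord_eq_2_iff Q.one_closed Q.l_one[OF Q.one_closed] by auto
    finally show ?thesis .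
  qed
  moreover have "generate (G Mod H) (insert H ?inv) = generate (G Mod H) ?inv"
  proof (rule equalityI)
    show "generate (G Mod H) (insert H ?inv) \<subseteq> generate (G Mod H) ?inv"
      using generate.one[of "G Mod H" ?inv] generate.incl[of _ ?inv "G Mod H"]
      by (intro Q.generate_subgroup_incl Q.generate_is_subgroup) auto
    show "generate (G Mod H) ?inv \<subseteq> generate (G Mod H) (insert H ?inv)"
      by (rule Q.mono_generate) blast
  qed
  ultimately have image_K: "(\<lambda>x. H #> x) ` ?K = generate (G Mod H) ?inv"
    using \<pi>.generate_img[OF square_roots_carrier] by simp
  have K_subgroup: "subgroup ?K G"
    using generate_is_subgroup[OF square_roots_carrier] .
  have H_K: "H \<subseteq> ?K"
    using subset_square_roots by (blast intro: generate.incl)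
  have "carrier G \<subseteq> ?K" if onto: "(\<lambda>x. H #> x) ` ?K = carrier (G Mod H)"
  proof
    fix g assume g: "g \<in> carrier G"
    then have "H #> g \<in> (\<lambda>x. H #> x) ` ?K"
      unfolding onto by (simp add: carrier_FactGroup)
    then obtain k where k: "k \<in> ?K" "H #> g = H #> k"
      by auto
    then obtain h where "h \<in> H" "g = h \<otimes> k"
      using rcos_self[OF g subgroup_axioms] by (auto simp: r_coset_def)
    then show "g \<in> ?K"
      using H_K k(1) subgroup.m_closed[OF K_subgroup] by blast
  qed
  then show ?thesis
    unfolding generated_by_involutions_def image_K[symmetric]
    using subgroup.subset[OF K_subgroup] by (auto simp: carrier_FactGroup)
qed

lemma involution_subnormal_series_imp_two_prime_simple:
  fixes G (structure)
  assumes "group G" and "finite (carrier G)" and series: "involution_subnormal_series G I t"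
  shows "two_prime_simple G"
proof -
  interpret group G by fact
  have "M = carrier G" if M: "M \<lhd> G" and odd: "odd (card (rcosets M))" for M
  proof -
    interpret M: normal M G by (rule M)
    have M_roots: "square_roots G M = M"
      using M.square_roots_eq_iff_odd_index[OF assms(2)] odd by simp
    have "I j \<subseteq> M" if "j \<le> t" for j
      using that
    proof (induction j)
      case 0
      then show ?case
        using series by (simp add: involution_subnormal_series_def)
    next
      case (Suc j)
      let ?K = "G\<lparr>carrier := I (Suc j)\<rparr>"
      have K: "subgroup (I (Suc j)) G" and N: "I j \<lhd> ?K"
        and gen: "generated_by_involutions (?K Mod I j)"
        using series Suc.prems by (auto simp: involution_subnormal_series_def)
      have "I (Suc j) = generate ?K (square_roots ?K (I j))"
        using normal.generated_by_involutions_FactGroup_iff[OF N] gen by simp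
      also have "\<dots> = generate G (square_roots ?K (I j))"
        by (rule generate_consistent[OF _ K]) (auto simp: square_roots_def)
      also have "\<dots> \<subseteq> M"
      proof (rule generate_subgroup_incl[OF _ M.subgroup_axioms])
        have "square_roots ?K (I j) \<subseteq> square_roots G M"
          using Suc subgroup.subset[OF K] by (auto simp: square_roots_def)
        then show "square_roots ?K (I j) \<subseteq> M"
          using M_roots by simp
      qed
      finally show ?case .
    qed
    then have "I t \<subseteq> M"
      by blast
    then show ?thesis
      using series M.subset by (simp add: involution_subnormal_series_def)
  qed
  then show ?thesis
    unfolding two_prime_simple_def by blast
qed

definition involution_series :: "('a, 'b) monoid_scheme \<Rightarrow> nat \<Rightarrow> 'a set" where
  "involution_series G j = ((\<lambda>N. generate G (square_roots G N)) ^^ j) {\<one>\<^bsub>G\<^esub>}"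

lemma involution_series_0 [simp]: "involution_series G 0 = {\<one>\<^bsub>G\<^esub>}"
  by (simp add: involution_series_def)

lemma involution_series_Suc [simp]:
  "involution_series G (Suc j) = generate G (square_roots G (involution_series G j))"
  by (simp add: involution_series_def)

lemma (in normal) normal_generate_square_roots: "generate G (square_roots G H) \<lhd> G"
proof (rule normal_generateI)
  show "square_roots G H \<subseteq> carrier G"
    by (auto simp: square_roots_def)
  fix x g assume x: "x \<in> square_roots G H" and g: "g \<in> carrier G"
  then have "(g \<otimes> x \<otimes> inv g) \<otimes> (g \<otimes> x \<otimes> inv g) = g \<otimes> (x \<otimes> x) \<otimes> inv g"
    by (simp add: square_roots_def m_assoc inv_solve_left')
  moreover have "g \<otimes> (x \<otimes> x) \<otimes> inv g \<in> H"
    using x g inv_op_closed2 by (simp add: square_roots_def)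
  ultimately show "g \<otimes> x \<otimes> inv g \<in> square_roots G H"
    using x g by (simp add: square_roots_def)
qed

lemma (in group) involution_series_normal: "involution_series G j \<lhd> G"
proof (induction j)
  case 0
  then show ?case
    using one_is_normal by simp
next
  case (Suc j)
  then show ?case
    using normal.normal_generate_square_roots by simp
qed

lemma (in group) involution_series_mono: "involution_series G j \<subseteq> involution_series G (Suc j)"
  using subgroup.subset_square_roots[OF normal_imp_subgroup[OF involution_series_normal]]
  by (auto intro: generate.incl)

lemma (in group) involution_subnormal_series_involution_series:
  assumes "involution_series G t = carrier G"
  shows "involution_subnormal_series G (involution_series G) t"
  unfolding involution_subnormal_series_def
proof (intro conjI allI impI)
  fix j
  let ?K = "G\<lparr>carrier := involution_series G (Suc j)\<rparr>"
  show K: "subgroup (involution_series G (Suc j)) G"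
    using normal_imp_subgroup[OF involution_series_normal] .
  show N: "involution_series G j \<lhd> ?K"
    using normal_restrict_supergroup[OF K involution_series_normal involution_series_mono] .
  have roots: "square_roots G (involution_series G j) \<subseteq> involution_series G (Suc j)"
    by (auto intro: generate.incl)
  then have "square_roots ?K (involution_series G j) = square_roots G (involution_series G j)"
    using subgroup.subset[OF K] by (auto simp: square_roots_def)
  then have "generate ?K (square_roots ?K (involution_series G j)) = involution_series G (Suc j)"
    using generate_consistent[OF roots K] by simp
  then show "generated_by_involutions (?K Mod involution_series G j)"
    using normal.generated_by_involutions_FactGroup_iff[OF N] by simp
qed (simp_all add: assms)

lemma two_prime_simple_imp_involution_subnormal_series:
  fixes G (structure)
  assumes "group G" and "finite (carrier G)" and "two_prime_simple G"
  shows "\<exists>I t. involution_subnormal_series G I t"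
proof -
  interpret group G by fact
  let ?I = "involution_series G"
  have series_carrier: "?I j \<subseteq> carrier G" for j
    using normal_imp_subgroup[OF involution_series_normal] by (rule subgroup.subset)
  obtain m where m: "?I (Suc m) = ?I m"
    using increasing_chain_stabilises[of ?I, OF involution_series_mono series_carrier assms(2)] by blast
  interpret N: normal "?I m" G
    by (rule involution_series_normal)
  have "square_roots G (?I m) \<subseteq> ?I (Suc m)"
    by (auto intro: generate.incl)
  with m have "square_roots G (?I m) = ?I m"
    using N.subset_square_roots by simp
  then have "odd (card (rcosets (?I m)))"
    using N.square_roots_eq_iff_odd_index[OF assms(2)] by simp
  then have "?I m = carrier G"
    using assms(3) involution_series_normal[of m] unfolding two_prime_simple_def by blast
  then show ?thesis
    using involution_subnormal_series_involution_series by blast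
qed

theorem mainTheorem15:
  fixes G :: "('a, 'b) monoid_scheme"
  assumes "group G" and "finite (carrier G)"
  shows "two_prime_simple G \<longleftrightarrow> (\<exists>I t. involution_subnormal_series G I t)"
  using two_prime_simple_imp_involution_subnormal_series[OF assms]
    involution_subnormal_series_imp_two_prime_simple[OF assms] by blast

end
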